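(* Let $X$ be a stacked simplicial complex of dimension $d$, and let $h,k$ be faces of $X$ whose union $h\cup k$ is not contained in any codimension one face. Then there exists a unique path between $h$ and $k$.
   Context: A simplicial complex $X$ on a finite vertex set $V$ is a family of subsets (faces) of $V$ closed under taking subsets, every element of $V$ lying in some face; facets are inclusion-maximal faces. $X$ is pure of dimension $d$ if every facet has $d+1$ elements; a codimension one face is a face with $d$ elements. $X$ is stacked if it is pure of some dimension $d$ and its facets can be ordered $F_0,F_1,\dots,F_k$ (a stacking order) such that for each $p\ge 1$, $F_p$ contains exactly one vertex $v_p$ not in $F_0\cup\dots\cup F_{p-1}$ (called the free vertex of $F_p$), and $F_p\setminus\{v_p\}\subseteq F_j$ for some $j<p$. A walk is a sequence of facets $f_1,\dots,f_p$ ($p\ge 1$) such that each $f_i\cap f_{i+1}$ has exactly $d$ elements; a path is a walk in which the faces $f_i\cap f_{i+1}$, $1\le i<p$, are pairwise distinct. For faces $h,k$ such that $h\cup k$ is not contained in any codimension one face, a path between $h$ and $k$, written $h\,|\,f_1,\dots,f_p\,|\,k$, is a path $f_1,\dots,f_p$ with $h\subseteq f_1$, $k\subseteq f_p$, and, if $p\ge 2$, $h\not\subseteq f_1\cap f_2$ and $k\not\subseteq f_p\cap f_{p-1}$. *)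

theory Defs
  imports Main
begin

definition simplicial_complex :: "'a set \<Rightarrow> 'a set set \<Rightarrow> bool" where
  "simplicial_complex V X \<longleftrightarrow> finite V \<and> (\<forall>f\<in>X. f \<subseteq> V)
     \<and> (\<forall>f\<in>X. \<forall>g. g \<subseteq> f \<longrightarrow> g \<in> X)
     \<and> (\<forall>v\<in>V. \<exists>f\<in>X. v \<in> f)"

definition facets :: "'a set set \<Rightarrow> 'a set set" where
  "facets X = {F \<in> X. \<forall>G\<in>X. F \<subseteq> G \<longrightarrow> G = F}"

definition pure :: "'a set set \<Rightarrow> nat \<Rightarrow> bool" where
  "pure X d \<longleftrightarrow> (\<forall>F\<in>facets X. card F = d + 1)"

definition stacking_order :: "'a set set \<Rightarrow> 'a set list \<Rightarrow> bool" where
  "stacking_order X Fs \<longleftrightarrow> Fs \<noteq> [] \<and> distinct Fs \<and> set Fs = facets X \<and>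
     (\<forall>p. 1 \<le> p \<and> p < length Fs \<longrightarrow>
        (\<exists>v. (Fs ! p) - (\<Union>j<p. Fs ! j) = {v} \<and>
             (\<exists>j<p. (Fs ! p) - {v} \<subseteq> Fs ! j)))"

definition stacked :: "'a set set \<Rightarrow> nat \<Rightarrow> bool" where
  "stacked X d \<longleftrightarrow> pure X d \<and> (\<exists>Fs. stacking_order X Fs)"

definition codim_one_face :: "'a set set \<Rightarrow> nat \<Rightarrow> 'a set \<Rightarrow> bool" where
  "codim_one_face X d c \<longleftrightarrow> c \<in> X \<and> card c = d"

definition walk :: "'a set set \<Rightarrow> nat \<Rightarrow> 'a set list \<Rightarrow> bool" where
  "walk X d fs \<longleftrightarrow> fs \<noteq> [] \<and> set fs \<subseteq> facets X \<and>
     (\<forall>i. i + 1 < length fs \<longrightarrow> card (fs ! i \<inter> fs ! (i + 1)) = d)"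

definition path :: "'a set set \<Rightarrow> nat \<Rightarrow> 'a set list \<Rightarrow> bool" where
  "path X d fs \<longleftrightarrow> walk X d fs \<and>
     distinct (map (\<lambda>i. fs ! i \<inter> fs ! (i + 1)) [0..<length fs - 1])"

definition path_between :: "'a set set \<Rightarrow> nat \<Rightarrow> 'a set \<Rightarrow> 'a set \<Rightarrow> 'a set list \<Rightarrow> bool" where
  "path_between X d h k fs \<longleftrightarrow> path X d fs \<and> h \<subseteq> hd fs \<and> k \<subseteq> last fs \<and>
     (2 \<le> length fs \<longrightarrow>
        \<not> h \<subseteq> fs ! 0 \<inter> fs ! 1 \<and>
        \<not> k \<subseteq> fs ! (length fs - 1) \<inter> fs ! (length fs - 2))"

end

theory Submission
  imports Defs
begin

(* Induct along the stacking order. A facet F glued on with free vertex v meets the older facets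
   in codimension one only along its base F - {v}; since the ridges of a path are distinct, F can
   only be an end of a path. So a path between h and k avoids F when v lies in neither face, is [F]
   when v lies in both, and when v lies in h only it is [F] or F followed by the unique older
   path between the base and k. Uniqueness in that last case rests on a second invariant, proved along
   the same induction: the intersection of the two end facets of a path lies in all its facets. *)

fun ridges :: "'a set list \<Rightarrow> 'a set list" where
  "ridges (a # b # xs) = (a \<inter> b) # ridges (b # xs)"
| "ridges _ = []"

lemma ridges_Cons: "ridges (a # xs) = (if xs = [] then [] else (a \<inter> hd xs) # ridges xs)"
  by (cases xs) auto

lemma ridges_append:
  "ridges (xs @ ys) =
     ridges xs @ (if xs = [] \<or> ys = [] then [] else [last xs \<inter> hd ys]) @ ridges ys"
  by (induction xs rule: ridges.induct) (auto simp: ridges_Cons)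

lemma ridges_rev: "ridges (rev xs) = rev (ridges xs)"
  by (induction xs) (auto simp: ridges_append ridges_Cons last_rev hd_rev Int_commute)

lemma ridges_conv_nth: "ridges xs = map (\<lambda>i. xs ! i \<inter> xs ! (i + 1)) [0..<length xs - 1]"
  by (induction xs rule: ridges.induct)
    (auto simp: upt_conv_Cons map_Suc_upt[symmetric] simp del: upt_Suc)

lemma in_set_ridgesD: "r \<in> set (ridges xs) \<Longrightarrow> \<exists>a\<in>set xs. \<exists>b\<in>set xs. r = a \<inter> b"
  by (induction xs rule: ridges.induct) auto

lemma ridges_eq_Nil_iff: "ridges xs = [] \<longleftrightarrow> length xs < 2"
  by (induction xs rule: ridges.induct) auto

text \<open>Paths and paths between two faces, relative to a set \<open>S\<close> of facets, so that the
  induction can enlarge \<open>S\<close> one facet at a time.\<close>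

definition ridge_path :: "nat \<Rightarrow> 'a set set \<Rightarrow> 'a set list \<Rightarrow> bool" where
  "ridge_path d S xs \<longleftrightarrow>
     xs \<noteq> [] \<and> set xs \<subseteq> S \<and> (\<forall>r\<in>set (ridges xs). card r = d) \<and> distinct (ridges xs)"

definition ridge_path_between :: "nat \<Rightarrow> 'a set set \<Rightarrow> 'a set \<Rightarrow> 'a set \<Rightarrow> 'a set list \<Rightarrow> bool" where
  "ridge_path_between d S h k xs \<longleftrightarrow> ridge_path d S xs \<and> h \<subseteq> hd xs \<and> k \<subseteq> last xs \<and>
     (ridges xs \<noteq> [] \<longrightarrow> \<not> h \<subseteq> hd (ridges xs) \<and> \<not> k \<subseteq> last (ridges xs))"

definition face_of :: "'a set set \<Rightarrow> 'a set \<Rightarrow> bool" where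
  "face_of S h \<longleftrightarrow> (\<exists>g\<in>S. h \<subseteq> g)"

definition ridge_of :: "nat \<Rightarrow> 'a set set \<Rightarrow> 'a set \<Rightarrow> bool" where
  "ridge_of d S c \<longleftrightarrow> card c = d \<and> face_of S c"

lemma ridge_path_rev [simp]: "ridge_path d S (rev xs) \<longleftrightarrow> ridge_path d S xs"
  by (simp add: ridge_path_def ridges_rev)

lemma ridge_path_between_rev:
  "ridge_path_between d S h k (rev xs) \<longleftrightarrow> ridge_path_between d S k h xs"
  by (auto simp: ridge_path_between_def ridges_rev hd_rev last_rev ridge_path_def)

lemma ex1_ridge_path_between_swap:
  assumes "\<exists>!xs. ridge_path_between d S h k xs"
  shows "\<exists>!xs. ridge_path_between d S k h xs"
proof -
  obtain xs where "ridge_path_between d S h k xs"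
    and "\<And>ys. ridge_path_between d S h k ys \<Longrightarrow> ys = xs"
    using assms by blast
  then show ?thesis
    by (intro ex1I[of _ "rev xs"]) (metis ridge_path_between_rev rev_rev_ident)+
qed

lemma ridge_path_mono: "ridge_path d S xs \<Longrightarrow> S \<subseteq> T \<Longrightarrow> ridge_path d T xs"
  by (auto simp: ridge_path_def)

lemma ridge_path_tl: "ridge_path d S (a # xs) \<Longrightarrow> xs \<noteq> [] \<Longrightarrow> ridge_path d S xs"
  by (auto simp: ridge_path_def ridges_Cons)

lemma ridge_path_take: "ridge_path d S xs \<Longrightarrow> 0 < m \<Longrightarrow> ridge_path d S (take m xs)"
  using ridges_append[of "take m xs" "drop m xs"] set_take_subset[of m xs]
  by (auto simp: ridge_path_def)

locale stacking_step =
  fixes d :: nat and S :: "'a set set" and F :: "'a set" and v :: 'a and G :: "'a set"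
  assumes card_facet: "\<And>g. g \<in> S \<Longrightarrow> card g = Suc d"
    and card_F: "card F = Suc d"
    and free_vertex: "v \<in> F"
    and free_vertex_new: "\<And>g. g \<in> S \<Longrightarrow> v \<notin> g"
    and G_in: "G \<in> S"
    and F_minus_v_subset_G: "F - {v} \<subseteq> G"
begin

definition base :: "'a set" where "base = F - {v}"

lemma finite_facet: "g \<in> S \<Longrightarrow> finite g"
  using card_facet card.infinite by fastforce

lemma F_notin: "F \<notin> S"
  using free_vertex free_vertex_new by blast

lemma finite_base: "finite base"
  using card_F card.infinite by (fastforce simp: base_def)

lemma card_base: "card base = d"
  using card_F free_vertex finite_base by (simp add: base_def)

lemma base_subset_F: "base \<subseteq> F"
  by (auto simp: base_def)

lemma free_vertex_notin_base: "v \<notin> base"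
  by (auto simp: base_def)

lemma face_of_base: "face_of S base"
  using F_minus_v_subset_G G_in by (auto simp: face_of_def base_def)

lemma ridge_of_base: "ridge_of d (insert F S) base"
  using card_base base_subset_F by (auto simp: ridge_of_def face_of_def)

lemma inter_F_subset_base: "g \<in> S \<Longrightarrow> g \<inter> F \<subseteq> base"
  using free_vertex_new by (auto simp: base_def)

lemma eq_base_if_subset: "c \<subseteq> base \<Longrightarrow> card c = d \<Longrightarrow> c = base"
  using card_subset_eq[OF finite_base] card_base by metis

lemma eq_base_if_superset: "finite c \<Longrightarrow> base \<subseteq> c \<Longrightarrow> card c = d \<Longrightarrow> c = base"
  using card_subset_eq card_base by metis

lemma face_of_insert_subset_F: "face_of (insert F S) h \<Longrightarrow> v \<in> h \<Longrightarrow> h \<subseteq> F"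
  using free_vertex_new by (auto simp: face_of_def)

lemma face_of_insert_old: "face_of (insert F S) h \<Longrightarrow> v \<notin> h \<Longrightarrow> face_of S h"
  using face_of_base by (auto simp: face_of_def base_def)

lemma path_inter_F:
  assumes p: "ridge_path d (insert F S) xs" and "a \<in> set xs" "a \<inter> F \<in> set (ridges xs)"
  shows "a \<inter> F = base"
proof -
  have card: "card (a \<inter> F) = d" using assms by (auto simp: ridge_path_def)
  then have "a \<noteq> F" using card_F by auto
  then have "a \<in> S" using assms by (auto simp: ridge_path_def)
  then show ?thesis using inter_F_subset_base eq_base_if_subset card by blast
qed

lemma F_not_interior:
  assumes p: "ridge_path d (insert F S) (as @ F # bs)"
  shows "as = [] \<or> bs = []"
proof (rule ccontr)
  assume "\<not> (as = [] \<or> bs = [])"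
  then have rs: "ridges (as @ F # bs) = ridges as @ [last as \<inter> F] @ (F \<inter> hd bs) # ridges bs"
    and "last as \<in> set (as @ F # bs)" "hd bs \<in> set (as @ F # bs)"
    by (simp_all add: ridges_append ridges_Cons)
  then have "last as \<inter> F = base" "hd bs \<inter> F = base"
    using path_inter_F[OF p, of "last as"] path_inter_F[OF p, of "hd bs"] by (simp_all add: Int_commute)
  then show False using p rs by (simp add: ridge_path_def Int_commute[of F])
qed

lemma F_not_both_ends:
  assumes p: "ridge_path d (insert F S) (F # cs @ [F])"
  shows False
proof (cases "cs = []")
  case True
  then show ?thesis using p card_F by (auto simp: ridge_path_def)
next
  case False
  then have rs: "ridges (F # cs @ [F]) = (F \<inter> hd cs) # ridges cs @ [last cs \<inter> F]"
    and "last cs \<in> set (F # cs @ [F])" "hd cs \<in> set (F # cs @ [F])"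
    by (simp_all add: ridges_append ridges_Cons)
  then have "last cs \<inter> F = base" "hd cs \<inter> F = base"
    using path_inter_F[OF p, of "last cs"] path_inter_F[OF p, of "hd cs"] by (simp_all add: Int_commute)
  then show False using p rs by (simp add: ridge_path_def Int_commute[of F])
qed

lemma path_after_F:
  assumes p: "ridge_path d (insert F S) (F # ys)" and "ys \<noteq> []"
  shows "ridge_path d S ys" and "F \<inter> hd ys = base"
proof -
  have "F \<notin> set ys"
  proof
    assume "F \<in> set ys"
    then obtain cs ds where ys: "ys = cs @ F # ds" by (meson split_list)
    then have "ds = []" using F_not_interior[of "F # cs" ds] p by simp
    then show False using F_not_both_ends[of cs] p ys by simp
  qed
  moreover have "ridge_path d (insert F S) ys" using ridge_path_tl p \<open>ys \<noteq> []\<close> by blast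
  ultimately show "ridge_path d S ys" by (auto simp: ridge_path_def)
  have "hd ys \<inter> F = base"
    using path_inter_F[OF p, of "hd ys"] \<open>ys \<noteq> []\<close> by (simp add: ridges_Cons Int_commute)
  then show "F \<inter> hd ys = base" by (simp add: Int_commute)
qed

lemma F_at_end:
  assumes p: "ridge_path d (insert F S) xs" and "F \<in> set xs"
  shows "xs = [F] \<or>
    (\<exists>ys. (xs = F # ys \<or> rev xs = F # ys) \<and> ridge_path d S ys \<and> F \<inter> hd ys = base)"
proof -
  obtain as bs where xs: "xs = as @ F # bs" using \<open>F \<in> set xs\<close> by (meson split_list)
  consider "as = []" "bs = []" | "as = []" "bs \<noteq> []" | "as \<noteq> []" "bs = []"
    using F_not_interior p xs by blast
  then show ?thesis
  proof cases
    case 2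
    then show ?thesis using path_after_F[of bs] p xs by auto
  next
    case 3
    then have "rev xs = F # rev as" "ridge_path d (insert F S) (F # rev as)"
      using p xs ridge_path_rev[of d "insert F S" xs] by auto
    then show ?thesis using path_after_F[of "rev as"] \<open>as \<noteq> []\<close> by auto
  qed (use xs in simp)
qed

lemma path_from_F:
  assumes p: "ridge_path d (insert F S) xs" and hd_xs: "hd xs = F"
  shows "xs = [F] \<or> (\<exists>ys. xs = F # ys \<and> ridge_path d S ys \<and> F \<inter> hd ys = base)"
proof -
  have "xs \<noteq> []" using p by (simp add: ridge_path_def)
  then have "F \<in> set xs" using hd_xs hd_in_set by fastforce
  from F_at_end[OF p this] show ?thesis
  proof (elim disjE exE conjE)
    fix ys assume rev_xs: "rev xs = F # ys" and pys: "ridge_path d S ys"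
    then have "ys \<noteq> []" by (simp add: ridge_path_def)
    then have "last ys = F" using rev_xs hd_xs last_rev[of xs] by simp
    moreover have "last ys \<in> S" using pys \<open>ys \<noteq> []\<close> by (auto simp: ridge_path_def)
    ultimately show ?thesis using F_notin by simp
  qed blast+
qed

lemma hd_path_between_eq_F:
  assumes "ridge_path_between d (insert F S) h k xs" and "v \<in> h"
  shows "hd xs = F"
proof -
  have "xs \<noteq> []" "set xs \<subseteq> insert F S" "v \<in> hd xs"
    using assms by (auto simp: ridge_path_between_def ridge_path_def)
  then have "hd xs \<in> insert F S" using hd_in_set by blast
  then show ?thesis using \<open>v \<in> hd xs\<close> free_vertex_new by blast
qed

lemma not_path_between_from_F:
  assumes "ridge_path_between d (insert F S) h k (F # ys)" and "ys \<noteq> []" and "v \<notin> h"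
  shows False
proof -
  have "F \<inter> hd ys = base"
    using path_after_F assms by (auto simp: ridge_path_between_def)
  moreover have "h \<subseteq> base" using assms by (auto simp: ridge_path_between_def base_def)
  ultimately show False using assms by (auto simp: ridge_path_between_def ridges_Cons)
qed

lemma path_between_insert_iff_old:
  assumes "v \<notin> h" and "v \<notin> k" and no_ridge: "\<not> (\<exists>c. ridge_of d (insert F S) c \<and> h \<union> k \<subseteq> c)"
  shows "ridge_path_between d (insert F S) h k xs \<longleftrightarrow> ridge_path_between d S h k xs"
proof
  assume pb: "ridge_path_between d (insert F S) h k xs"
  then have p: "ridge_path d (insert F S) xs" by (simp add: ridge_path_between_def)
  have "F \<notin> set xs"
  proof
    assume "F \<in> set xs"
    from F_at_end[OF p this] show False
    proof (elim disjE exE conjE)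
      assume "xs = [F]"
      then have "h \<union> k \<subseteq> base" using pb assms by (auto simp: ridge_path_between_def base_def)
      then show False using no_ridge ridge_of_base by blast
    next
      fix ys assume "xs = F # ys" "ridge_path d S ys"
      then show False using not_path_between_from_F pb \<open>v \<notin> h\<close> by (auto simp: ridge_path_def)
    next
      fix ys assume "rev xs = F # ys" "ridge_path d S ys"
      moreover have "ridge_path_between d (insert F S) k h (rev xs)"
        using pb by (simp add: ridge_path_between_rev)
      ultimately show False using not_path_between_from_F \<open>v \<notin> k\<close> by (auto simp: ridge_path_def)
    qed
  qed
  then show "ridge_path_between d S h k xs" using pb by (auto simp: ridge_path_between_def ridge_path_def)
qed (auto simp: ridge_path_between_def intro: ridge_path_mono)

lemma ex1_path_between_free_vertex_both:
  assumes "face_of (insert F S) h" "face_of (insert F S) k" and "v \<in> h" "v \<in> k"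
  shows "\<exists>!xs. ridge_path_between d (insert F S) h k xs"
proof (rule ex1I[of _ "[F]"])
  show "ridge_path_between d (insert F S) h k [F]"
    using face_of_insert_subset_F assms by (simp add: ridge_path_between_def ridge_path_def)
  fix xs assume pb: "ridge_path_between d (insert F S) h k xs"
  then have "hd xs = F" "last xs = F"
    using hd_path_between_eq_F assms ridge_path_between_rev hd_rev by metis+
  have "ridge_path d (insert F S) xs" using pb by (simp add: ridge_path_between_def)
  from path_from_F[OF this \<open>hd xs = F\<close>] show "xs = [F]"
  proof (elim disjE exE conjE)
    fix ys assume "xs = F # ys" "ridge_path d S ys"
    then have "last xs \<in> S" by (auto simp: ridge_path_def)
    then show ?thesis using \<open>last xs = F\<close> F_notin by simp
  qed
qed

lemma path_between_from_F:
  assumes pb: "ridge_path_between d (insert F S) h k xs"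
    and "v \<in> h" and "v \<notin> k" and "\<not> k \<subseteq> base"
  shows "\<exists>ys. xs = F # ys \<and> ridge_path_between d S base k ys"
proof -
  have p: "ridge_path d (insert F S) xs" using pb by (simp add: ridge_path_between_def)
  have "xs \<noteq> [F]" using pb assms by (auto simp: ridge_path_between_def base_def)
  then obtain ys where xs: "xs = F # ys" and pys: "ridge_path d S ys" and hd_ys: "F \<inter> hd ys = base"
    using path_from_F[OF p] hd_path_between_eq_F[OF pb \<open>v \<in> h\<close>] by blast
  have ys: "ys \<noteq> []" and rs: "ridges xs = base # ridges ys"
    using pys xs hd_ys by (auto simp: ridge_path_def ridges_Cons)
  have "\<not> base \<subseteq> hd (ridges ys)" if "ridges ys \<noteq> []"
  proof
    assume sub: "base \<subseteq> hd (ridges ys)"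
    have hd_in: "hd (ridges ys) \<in> set (ridges ys)" using that by simp
    then have "card (hd (ridges ys)) = d" "finite (hd (ridges ys))"
      using pys in_set_ridgesD[OF hd_in] finite_facet by (auto simp: ridge_path_def)
    then have "hd (ridges ys) = base" using sub eq_base_if_superset by blast
    then show False using hd_in p rs by (simp add: ridge_path_def)
  qed
  then have "ridge_path_between d S base k ys"
    using pb pys hd_ys xs rs ys by (auto simp: ridge_path_between_def)
  then show ?thesis using xs by blast
qed

end

text \<open>The two induction hypotheses, about the facets \<open>S\<close> present before \<open>F\<close> is added.\<close>

locale stacking_step_ends = stacking_step +
  assumes ends_inter_subset: "ridge_path d S xs \<Longrightarrow> x \<in> set xs \<Longrightarrow> hd xs \<inter> last xs \<subseteq> x"
begin

lemma ends_inter_subset_after_F: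
  assumes pys: "ridge_path d S ys" and hd_ys: "F \<inter> hd ys = base" and x: "x \<in> set (F # ys)"
  shows "F \<inter> last ys \<subseteq> x"
proof -
  have "ys \<noteq> []" "last ys \<in> S" using pys by (auto simp: ridge_path_def)
  then have "F \<inter> last ys \<subseteq> hd ys \<inter> last ys" using inter_F_subset_base hd_ys by blast
  then show ?thesis using ends_inter_subset[OF pys] x by auto
qed

lemma ends_inter_subset_insert:
  assumes p: "ridge_path d (insert F S) xs" and x: "x \<in> set xs"
  shows "hd xs \<inter> last xs \<subseteq> x"
proof (cases "F \<in> set xs")
  case False
  then have "ridge_path d S xs" using p by (auto simp: ridge_path_def)
  then show ?thesis using ends_inter_subset x by blast
next
  case True
  from F_at_end[OF p True] show ?thesis
  proof (elim disjE exE conjE)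
    fix ys assume xs: "xs = F # ys" and pys: "ridge_path d S ys" and "F \<inter> hd ys = base"
    then have "F \<inter> last ys \<subseteq> x" using ends_inter_subset_after_F x by blast
    then show ?thesis using xs pys by (simp add: ridge_path_def)
  next
    fix ys assume xs: "rev xs = F # ys" and pys: "ridge_path d S ys" and "F \<inter> hd ys = base"
    moreover have "x \<in> set (rev xs)" using x by simp
    ultimately have "F \<inter> last ys \<subseteq> x" using ends_inter_subset_after_F by metis
    moreover have "hd xs = last ys" "last xs = F"
      using xs pys last_rev[of xs] hd_rev[of xs] by (auto simp: ridge_path_def)
    ultimately show ?thesis by blast
  qed (use x in simp)
qed

lemma ex1_path_between_subset_base:
  assumes "face_of (insert F S) h" and "v \<in> h" and "k \<subseteq> base"
  shows "\<exists>!xs. ridge_path_between d (insert F S) h k xs"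
proof (rule ex1I[of _ "[F]"])
  show "ridge_path_between d (insert F S) h k [F]"
    using face_of_insert_subset_F assms base_subset_F
    by (auto simp: ridge_path_between_def ridge_path_def)
  fix xs assume pb: "ridge_path_between d (insert F S) h k xs"
  then have "ridge_path d (insert F S) xs" by (simp add: ridge_path_between_def)
  from path_from_F[OF this hd_path_between_eq_F[OF pb \<open>v \<in> h\<close>]] show "xs = [F]"
  proof (elim disjE exE conjE)
    fix ys assume xs: "xs = F # ys" and pys: "ridge_path d S ys" and hd_ys: "F \<inter> hd ys = base"
    then have "ys \<noteq> []" by (simp add: ridge_path_def)
    then have "k \<subseteq> F \<inter> last ys"
      using pb xs \<open>k \<subseteq> base\<close> base_subset_F by (auto simp: ridge_path_between_def)
    then have "\<forall>x\<in>set xs. k \<subseteq> x" using ends_inter_subset_after_F[OF pys hd_ys] xs by blast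
    moreover have "ridges xs \<noteq> []" using xs \<open>ys \<noteq> []\<close> by (simp add: ridges_Cons)
    ultimately have "k \<subseteq> last (ridges xs)"
      using in_set_ridgesD[of "last (ridges xs)" xs] by fastforce
    then show ?thesis using pb \<open>ridges xs \<noteq> []\<close> by (simp add: ridge_path_between_def)
  qed
qed

lemma base_notin_ridges:
  assumes pb: "ridge_path_between d S base k ys"
  shows "base \<notin> set (ridges ys)"
proof
  assume "base \<in> set (ridges ys)"
  then obtain i where "i < length ys - 1" "ys ! i \<inter> ys ! (i + 1) = base"
    unfolding ridges_conv_nth by auto
  then have i: "i + 2 \<le> length ys" "ys ! i \<inter> ys ! (i + 1) = base" by simp_all
  then obtain a b cs where ys: "ys = a # b # cs" by (cases ys; cases "tl ys") auto
  define zs where "zs = take (i + 2) ys"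
  have "ridge_path d S zs"
    using pb ridge_path_take[of d S ys "i + 2"] by (simp add: ridge_path_between_def zs_def)
  moreover have "last zs = ys ! (i + 1)" using i by (simp add: zs_def take_Suc_conv_app_nth)
  moreover have "hd zs = a" "b \<in> set zs" using ys by (simp_all add: zs_def)
  ultimately have "a \<inter> ys ! (i + 1) \<subseteq> b" using ends_inter_subset by metis
  moreover have "base \<subseteq> a" using pb ys by (simp add: ridge_path_between_def)
  ultimately have "base \<subseteq> a \<inter> b" using i by auto
  then show False using pb ys by (simp add: ridge_path_between_def)
qed

lemma path_between_Cons_F:
  assumes pb: "ridge_path_between d S base k ys"
    and "\<not> k \<subseteq> base" and "h \<subseteq> F" and "v \<in> h"
  shows "ridge_path_between d (insert F S) h k (F # ys)"
proof -
  have pys: "ridge_path d S ys" and ys: "ys \<noteq> []" and "base \<subseteq> hd ys"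
    using pb by (auto simp: ridge_path_between_def ridge_path_def)
  moreover have "hd ys \<in> S" using pys ys by (auto simp: ridge_path_def)
  ultimately have "F \<inter> hd ys = base" using inter_F_subset_base base_subset_F by blast
  then have rs: "ridges (F # ys) = base # ridges ys" using ys by (simp add: ridges_Cons)
  then have "ridge_path d (insert F S) (F # ys)"
    using pys base_notin_ridges[OF pb] card_base by (auto simp: ridge_path_def)
  moreover have "\<not> k \<subseteq> last (ridges (F # ys))"
    using pb rs \<open>\<not> k \<subseteq> base\<close> by (cases "ridges ys = []") (auto simp: ridge_path_between_def)
  ultimately show ?thesis
    using pb rs ys assms free_vertex_notin_base by (auto simp: ridge_path_between_def)
qed

end

locale stacking_step_unique = stacking_step_ends +
  assumes ex1_path_between:
    "face_of S h \<Longrightarrow> face_of S k \<Longrightarrow> \<not> (\<exists>c. ridge_of d S c \<and> h \<union> k \<subseteq> c) \<Longrightarrow>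
      \<exists>!xs. ridge_path_between d S h k xs"
begin

lemma ex1_path_between_free_vertex_left:
  assumes fh: "face_of (insert F S) h" and fk: "face_of (insert F S) k"
    and "v \<in> h" and "v \<notin> k"
  shows "\<exists>!xs. ridge_path_between d (insert F S) h k xs"
proof (cases "k \<subseteq> base")
  case True
  then show ?thesis using ex1_path_between_subset_base fh \<open>v \<in> h\<close> by blast
next
  case False
  have "\<not> (\<exists>c. ridge_of d S c \<and> base \<union> k \<subseteq> c)"
  proof
    assume "\<exists>c. ridge_of d S c \<and> base \<union> k \<subseteq> c"
    then obtain c g where c: "card c = d" "g \<in> S" "c \<subseteq> g" "base \<union> k \<subseteq> c"
      by (auto simp: ridge_of_def face_of_def)
    then have "finite c" using finite_facet finite_subset by blast
    then have "c = base" using c eq_base_if_superset by blast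
    then show False using c False by blast
  qed
  then obtain ys where ys: "ridge_path_between d S base k ys"
    and unique: "\<And>zs. ridge_path_between d S base k zs \<Longrightarrow> zs = ys"
    using ex1_path_between face_of_base face_of_insert_old[OF fk \<open>v \<notin> k\<close>] by blast
  show ?thesis
  proof (rule ex1I[of _ "F # ys"])
    show "ridge_path_between d (insert F S) h k (F # ys)"
      using path_between_Cons_F[OF ys False] face_of_insert_subset_F[OF fh] \<open>v \<in> h\<close> by blast
    fix xs assume "ridge_path_between d (insert F S) h k xs"
    then show "xs = F # ys"
      using path_between_from_F \<open>v \<in> h\<close> \<open>v \<notin> k\<close> False unique by blast
  qed
qed

lemma ex1_path_between_insert:
  assumes fh: "face_of (insert F S) h" and fk: "face_of (insert F S) k"
    and no_ridge: "\<not> (\<exists>c. ridge_of d (insert F S) c \<and> h \<union> k \<subseteq> c)"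
  shows "\<exists>!xs. ridge_path_between d (insert F S) h k xs"
proof -
  consider "v \<in> h" "v \<in> k" | "v \<in> h" "v \<notin> k" | "v \<notin> h" "v \<in> k" | "v \<notin> h" "v \<notin> k"
    by blast
  then show ?thesis
  proof cases
    case 1
    then show ?thesis using ex1_path_between_free_vertex_both fh fk by blast
  next
    case 2
    then show ?thesis using ex1_path_between_free_vertex_left fh fk by blast
  next
    case 3
    then show ?thesis
      using ex1_path_between_free_vertex_left[OF fk fh] ex1_ridge_path_between_swap by blast
  next
    case 4
    have "\<not> (\<exists>c. ridge_of d S c \<and> h \<union> k \<subseteq> c)"
      using no_ridge by (auto simp: ridge_of_def face_of_def)
    then have "\<exists>!xs. ridge_path_between d S h k xs"
      using ex1_path_between face_of_insert_old fh fk 4 by blast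
    then show ?thesis using path_between_insert_iff_old[OF 4 no_ridge] by simp
  qed
qed

end

inductive stacked_facets :: "nat \<Rightarrow> 'a set list \<Rightarrow> bool" where
  single: "card F = Suc d \<Longrightarrow> stacked_facets d [F]"
| snoc: "stacked_facets d Fs \<Longrightarrow> card F = Suc d \<Longrightarrow> v \<in> F \<Longrightarrow> v \<notin> \<Union>(set Fs) \<Longrightarrow>
    G \<in> set Fs \<Longrightarrow> F - {v} \<subseteq> G \<Longrightarrow> stacked_facets d (Fs @ [F])"

lemma stacked_facets_card: "stacked_facets d Fs \<Longrightarrow> g \<in> set Fs \<Longrightarrow> card g = Suc d"
  by (induction rule: stacked_facets.induct) auto

lemma stacked_facets_stacking_step:
  "stacked_facets d Fs \<Longrightarrow> card F = Suc d \<Longrightarrow> v \<in> F \<Longrightarrow> v \<notin> \<Union>(set Fs) \<Longrightarrow>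
    G \<in> set Fs \<Longrightarrow> F - {v} \<subseteq> G \<Longrightarrow> stacking_step d (set Fs) F v G"
  unfolding stacking_step_def using stacked_facets_card by blast

lemma ridge_path_singleton: "ridge_path d {F} xs \<Longrightarrow> card F = Suc d \<Longrightarrow> xs = [F]"
  by (cases xs rule: ridges.cases) (auto simp: ridge_path_def)

lemma stacked_facets_ends_inter_subset:
  "stacked_facets d Fs \<Longrightarrow> ridge_path d (set Fs) xs \<Longrightarrow> x \<in> set xs \<Longrightarrow> hd xs \<inter> last xs \<subseteq> x"
proof (induction arbitrary: xs x rule: stacked_facets.induct)
  case (single F d)
  then show ?case using ridge_path_singleton by fastforce
next
  case (snoc d Fs F v G)
  interpret stacking_step_ends d "set Fs" F v G
    by (intro stacking_step_ends.intro stacking_step_ends_axioms.intro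
        stacked_facets_stacking_step snoc.hyps snoc.IH)
  show ?case using ends_inter_subset_insert snoc.prems by simp
qed

lemma stacked_facets_ex1_path_between:
  "stacked_facets d Fs \<Longrightarrow> face_of (set Fs) h \<Longrightarrow> face_of (set Fs) k \<Longrightarrow>
    \<not> (\<exists>c. ridge_of d (set Fs) c \<and> h \<union> k \<subseteq> c) \<Longrightarrow> \<exists>!xs. ridge_path_between d (set Fs) h k xs"
proof (induction arbitrary: h k rule: stacked_facets.induct)
  case (single F d)
  show ?case
  proof (rule ex1I[of _ "[F]"])
    show "ridge_path_between d (set [F]) h k [F]"
      using single by (auto simp: face_of_def ridge_path_between_def ridge_path_def)
  qed (use ridge_path_singleton single in \<open>auto simp: ridge_path_between_def\<close>)
next
  case (snoc d Fs F v G)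
  interpret stacking_step_unique d "set Fs" F v G
    by (intro stacking_step_unique.intro stacking_step_ends.intro stacking_step_unique_axioms.intro
        stacking_step_ends_axioms.intro stacked_facets_stacking_step snoc.hyps snoc.IH
        stacked_facets_ends_inter_subset[OF snoc.hyps(1)])
  show ?case using ex1_path_between_insert snoc.prems by simp
qed

lemma stacked_facets_take:
  assumes so: "stacking_order X Fs" and pure: "pure X d"
  shows "0 < n \<Longrightarrow> n \<le> length Fs \<Longrightarrow> stacked_facets d (take n Fs)"
proof (induction n)
  case (Suc n)
  have n: "n < length Fs" using Suc.prems by simp
  have card: "card (Fs ! n) = Suc d"
    using so pure n by (auto simp: stacking_order_def pure_def)
  have take: "take (Suc n) Fs = take n Fs @ [Fs ! n]"
    using n by (simp add: take_Suc_conv_app_nth)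
  show ?case
  proof (cases "n = 0")
    case True
    then show ?thesis using take card stacked_facets.single by simp
  next
    case False
    have "\<exists>v. Fs ! n - (\<Union>j<n. Fs ! j) = {v} \<and> (\<exists>j<n. Fs ! n - {v} \<subseteq> Fs ! j)"
      using so n False by (auto simp: stacking_order_def)
    then obtain v j where v: "Fs ! n - (\<Union>j<n. Fs ! j) = {v}" and j: "j < n" "Fs ! n - {v} \<subseteq> Fs ! j"
      by blast
    have "set (take n Fs) = (\<lambda>j. Fs ! j) ` {..<n}"
      using n nth_image[of n Fs] by (simp add: lessThan_atLeast0)
    then have "v \<in> Fs ! n" "v \<notin> \<Union>(set (take n Fs))" "Fs ! j \<in> set (take n Fs)"
      using v j by auto
    then show ?thesis
      using stacked_facets.snoc[OF _ card _ _ _ j(2)] Suc.IH False n take by simp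
  qed
qed simp

lemma stacking_order_stacked_facets: "stacking_order X Fs \<Longrightarrow> pure X d \<Longrightarrow> stacked_facets d Fs"
  using stacked_facets_take[of X Fs d "length Fs"] by (simp add: stacking_order_def)

lemma path_between_iff: "path_between X d h k fs \<longleftrightarrow> ridge_path_between d (facets X) h k fs"
proof -
  have "walk X d fs \<longleftrightarrow> fs \<noteq> [] \<and> set fs \<subseteq> facets X \<and> (\<forall>r\<in>set (ridges fs). card r = d)"
    unfolding walk_def ridges_conv_nth by auto
  then have path: "path X d fs \<longleftrightarrow> ridge_path d (facets X) fs"
    unfolding path_def ridge_path_def ridges_conv_nth by simp
  have ends: "hd (ridges fs) = fs ! 0 \<inter> fs ! 1 \<and>
      last (ridges fs) = fs ! (length fs - 1) \<inter> fs ! (length fs - 2)"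
    if len: "2 \<le> length fs"
  proof -
    obtain n where n: "length fs = Suc (Suc n)" using len le_Suc_ex[of 2 "length fs"] by auto
    then have "hd (ridges fs) = fs ! 0 \<inter> fs ! 1"
      by (simp add: ridges_conv_nth upt_conv_Cons del: upt_Suc)
    moreover have "last (ridges fs) = fs ! (length fs - 2) \<inter> fs ! (length fs - 1)"
      using n by (simp add: ridges_conv_nth)
    ultimately show ?thesis by (simp add: Int_commute)
  qed
  show ?thesis
    unfolding path_between_def ridge_path_between_def path
    by (cases "2 \<le> length fs") (simp_all add: ridges_eq_Nil_iff ends)
qed

lemma simplicial_complex_finite: "simplicial_complex V X \<Longrightarrow> finite X"
proof -
  assume "simplicial_complex V X"
  then have "X \<subseteq> Pow V" "finite V" by (auto simp: simplicial_complex_def)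
  then show "finite X" using finite_subset by blast
qed

lemma face_of_facets:
  assumes "finite X" and "h \<in> X"
  shows "face_of (facets X) h"
proof -
  obtain m where "m \<in> X" "h \<subseteq> m" "\<forall>b\<in>X. m \<subseteq> b \<longrightarrow> m = b"
    using finite_has_maximal2[OF assms] by blast
  then show ?thesis by (auto simp: face_of_def facets_def)
qed

lemma ridge_of_facets_codim_one_face:
  assumes "simplicial_complex V X" and "ridge_of d (facets X) c"
  shows "codim_one_face X d c"
proof -
  obtain g where "card c = d" "g \<in> X" "c \<subseteq> g"
    using assms(2) by (auto simp: ridge_of_def face_of_def facets_def)
  then show ?thesis using assms(1) by (simp add: simplicial_complex_def codim_one_face_def)
qed

theorem lemma2p9:
  fixes V :: "'a set" and X :: "'a set set" and d :: nat and h k :: "'a set"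
  assumes "simplicial_complex V X"
    and "stacked X d"
    and "h \<in> X" and "k \<in> X"
    and "\<not> (\<exists>c. codim_one_face X d c \<and> h \<union> k \<subseteq> c)"
  shows "\<exists>!fs. path_between X d h k fs"
proof -
  obtain Fs where order: "stacking_order X Fs" and "pure X d"
    using assms(2) by (auto simp: stacked_def)
  then have "stacked_facets d Fs" by (rule stacking_order_stacked_facets)
  moreover have "facets X = set Fs" using order by (simp add: stacking_order_def)
  moreover have "face_of (facets X) h" "face_of (facets X) k"
    using face_of_facets simplicial_complex_finite assms(1,3,4) by blast+
  moreover have "\<not> (\<exists>c. ridge_of d (facets X) c \<and> h \<union> k \<subseteq> c)"
    using assms(5) ridge_of_facets_codim_one_face[OF assms(1)] by blast
  ultimately show ?thesis
    unfolding path_between_iff using stacked_facets_ex1_path_between by metis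
qed

end
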